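(* The edge generating series of the Dyck lattices is $$\sum_{n\ge0}\ell(\mathcal{D}_n)x^n=\frac{1-3x-(1-x)\sqrt{1-4x}}{2x\sqrt{1-4x}}.$$ Moreover, for every $n\ge2$, $$\ell(\mathcal{D}_n)=\frac12\binom{2n}{n}\frac{n-1}{n+1}=\binom{2n-1}{n-2},$$ and for every $n\ge1$ the Hasse index is $i(\mathcal{D}_n)=(n-1)/2$; in particular $i(\mathcal{D}_n)\sim n/2$.
   Context: Steps: $U=(1,1)$, $D=(1,-1)$. $\mathcal{D}_n$ is the set of Dyck paths of semi-length $n$ (lattice paths from $(0,0)$ to $(2n,0)$ with steps $U,D$ never going below the $x$-axis), partially ordered by $\gamma_1\le\gamma_2$ iff $\gamma_1$ lies weakly below $\gamma_2$. For a finite poset $P$, $\ell(P)$ is the number of edges of its Hasse diagram (i.e. the number of covering pairs), and the Hasse index is $i(P)=\ell(P)/|P|$. $a_n\sim b_n$ means $a_n/b_n\to1$. *)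

theory Defs
  imports Complex_Main "HOL-Library.Landau_Symbols"
begin

text \<open>A lattice path is a list of booleans: True = U = (1,1), False = D = (1,-1).
  height xs k is the height after the first k steps.\<close>
definition height :: "bool list \<Rightarrow> nat \<Rightarrow> int" where
  "height xs k = sum_list (map (\<lambda>b. if b then 1 else -1) (take k xs))"

definition dyck :: "nat \<Rightarrow> bool list set" where
  "dyck n = {xs. length xs = 2 * n \<and> (\<forall>k \<le> 2 * n. 0 \<le> height xs k) \<and> height xs (2 * n) = 0}"

definition path_le :: "bool list \<Rightarrow> bool list \<Rightarrow> bool" where
  "path_le xs ys = (\<forall>k. height xs k \<le> height ys k)"

definition covers :: "'a set \<Rightarrow> ('a \<Rightarrow> 'a \<Rightarrow> bool) \<Rightarrow> 'a \<Rightarrow> 'a \<Rightarrow> bool" where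
  "covers P le a b = (a \<in> P \<and> b \<in> P \<and> le a b \<and> a \<noteq> b \<and>
     \<not> (\<exists>c\<in>P. le a c \<and> le c b \<and> c \<noteq> a \<and> c \<noteq> b))"

definition hasse_edges :: "'a set \<Rightarrow> ('a \<Rightarrow> 'a \<Rightarrow> bool) \<Rightarrow> nat" where
  "hasse_edges P le = card {(a, b). covers P le a b}"

definition hasse_index :: "'a set \<Rightarrow> ('a \<Rightarrow> 'a \<Rightarrow> bool) \<Rightarrow> real" where
  "hasse_index P le = real (hasse_edges P le) / real (card P)"

definition ell_dyck :: "nat \<Rightarrow> nat" where
  "ell_dyck n = hasse_edges (dyck n) path_le"

end

theory Submission
  imports Defs "HOL-Analysis.Analysis" "HOL-Real_Asymp.Real_Asymp"
begin

(* A covering pair gamma < gamma' of D_n is exactly obtained by turning one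
   valley DU of gamma into a peak UD, so l(D_n) is the total number of valleys of all Dyck paths
   of semi-length n.  Every nonempty Dyck path has one peak more than valleys, and inserting a
   peak UD into a path of D_m at any of its 2m + 1 positions is a bijection onto the pairs
   (path of D_(m+1), chosen peak).  Hence
       l(D_(m+1)) + |D_(m+1)| = (2m + 1) |D_m|,
   and with the Catalan numbers |D_n| = C(2n, n) / (n + 1) this gives the closed forms of
   l(D_n) and of the Hasse index.  The generating function follows by writing l(D_n) as a
   combination of central binomial coefficients, whose generating function is 1 / sqrt (1 - 4x). *)

abbreviation updown :: "bool \<Rightarrow> int" where
  "updown b \<equiv> (if b then 1 else -1)"

lemma height_0 [simp]: "height xs 0 = 0"
  by (simp add: height_def)

lemma height_Nil [simp]: "height [] k = 0"
  by (simp add: height_def)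

lemma height_Cons_Suc [simp]: "height (x # xs) (Suc k) = updown x + height xs k"
  by (simp add: height_def)

lemma height_append: "height (xs @ ys) k = height xs k + height ys (k - length xs)"
  by (simp add: height_def)

lemma height_take: "height (take i xs) k = height xs (min i k)"
  by (simp add: height_def min.commute)

lemma height_drop: "height (drop i xs) k = height xs (i + k) - height xs i"
proof -
  have "take (i + k) xs = take i xs @ take k (drop i xs)"
    by (metis take_add)
  then show ?thesis by (simp add: height_def)
qed

lemma height_ge_length: "length xs \<le> k \<Longrightarrow> height xs k = height xs (length xs)"
  by (simp add: height_def)

lemma height_Suc: "k < length xs \<Longrightarrow> height xs (Suc k) = height xs k + updown (xs ! k)"
  by (simp add: height_def take_Suc_conv_app_nth)

lemma height_lower_bound: "- int k \<le> height xs k"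
proof (induction k)
  case (Suc k)
  show ?case
  proof (cases "k < length xs")
    case True then show ?thesis using Suc.IH by (simp add: height_Suc)
  next
    case False then show ?thesis using Suc.IH by (simp add: height_def)
  qed
qed simp

lemma height_parity: "k \<le> length xs \<Longrightarrow> even (height xs k + int k)"
  by (induction k) (auto simp: height_Suc)

lemma height_diff_even:
  assumes "length xs = length ys" "k \<le> length xs"
  shows "even (height ys k - height xs k)"
proof -
  have "height ys k - height xs k = (height ys k + int k) - (height xs k + int k)" by simp
  then show ?thesis using height_parity[of k xs] height_parity[of k ys] assms by simp
qed

lemma heights_eq_imp_eq:
  assumes "length xs = length ys" "\<And>k. height xs k = height ys k"
  shows "xs = ys"
proof (rule nth_equalityI)
  show "length xs = length ys" by fact
  fix i assume "i < length xs"
  then have "updown (xs ! i) = updown (ys ! i)"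
    using height_Suc[of i xs] height_Suc[of i ys] assms by simp
  then show "xs ! i = ys ! i" by (auto split: if_splits)
qed

(* The two local moves of the proof are instances: flipping a valley DU into a peak UD
   (j = i + 2) and inserting a new peak UD (j = i). *)
lemma height_replace:
  assumes "i \<le> j" "j \<le> length xs"
  shows "height (take i xs @ x # y # drop j xs) k =
    (if k \<le> i then height xs k
     else if k = Suc i then height xs i + updown x
     else height xs i + updown x + updown y + (height xs (k - i - 2 + j) - height xs j))"
proof -
  have "length (take i xs) = i" using assms by simp
  then have split: "height (take i xs @ x # y # drop j xs) k
      = height xs (min i k) + height (x # y # drop j xs) (k - i)"
    by (simp only: height_append height_take)
  show ?thesis
  proof (cases "k \<le> Suc i")
    case True then show ?thesis unfolding split by (auto simp: min_def le_Suc_eq)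
  next
    case False
    then have "k - i = Suc (Suc (k - i - 2))" by simp
    then show ?thesis unfolding split using False by (simp add: height_drop add.commute)
  qed
qed

lemma dyck_length: "a \<in> dyck n \<Longrightarrow> length a = 2 * n"
  by (simp add: dyck_def)

lemma dyck_nonneg: "a \<in> dyck n \<Longrightarrow> 0 \<le> height a k"
  unfolding dyck_def by (cases "k \<le> 2 * n") (auto simp: height_ge_length)

lemma dyck_end: "a \<in> dyck n \<Longrightarrow> 2 * n \<le> k \<Longrightarrow> height a k = 0"
  unfolding dyck_def by (auto simp: height_ge_length)

lemma dyck_iff: "a \<in> dyck n \<longleftrightarrow> length a = 2 * n \<and> (\<forall>k. 0 \<le> height a k) \<and> height a (2 * n) = 0"
  using dyck_nonneg unfolding dyck_def by blast

lemma finite_dyck: "finite (dyck n)"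
proof (rule finite_subset)
  show "dyck n \<subseteq> {xs. set xs \<subseteq> UNIV \<and> length xs = 2 * n}" by (auto simp: dyck_def)
  show "finite {xs :: bool list. set xs \<subseteq> UNIV \<and> length xs = 2 * n}"
    by (rule finite_lists_length_eq) simp
qed

definition pairs_where :: "(bool \<Rightarrow> bool \<Rightarrow> bool) \<Rightarrow> bool list \<Rightarrow> nat set" where
  "pairs_where P a = {i. Suc i < length a \<and> P (a ! i) (a ! Suc i)}"

definition valleys :: "bool list \<Rightarrow> nat set" where
  "valleys = pairs_where (\<lambda>x y. \<not> x \<and> y)"

definition peaks :: "bool list \<Rightarrow> nat set" where
  "peaks = pairs_where (\<lambda>x y. x \<and> \<not> y)"

lemma valley_iff: "i \<in> valleys a \<longleftrightarrow> Suc i < length a \<and> \<not> a ! i \<and> a ! Suc i"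
  by (simp add: valleys_def pairs_where_def)

lemma peak_iff: "i \<in> peaks a \<longleftrightarrow> Suc i < length a \<and> a ! i \<and> \<not> a ! Suc i"
  by (simp add: peaks_def pairs_where_def)

lemma finite_pairs_where: "finite (pairs_where P a)"
  by (rule finite_subset[of _ "{..<length a}"]) (auto simp: pairs_where_def)

lemma card_pairs_where_Cons2:
  "card (pairs_where P (x # y # zs)) = (if P x y then 1 else 0) + card (pairs_where P (y # zs))"
proof -
  have "pairs_where P (x # y # zs) = (if P x y then insert 0 else id) (Suc ` pairs_where P (y # zs))"
    by (rule set_eqI) (auto simp: pairs_where_def less_Suc_eq_0_disj)
  then show ?thesis by (simp add: card_image finite_pairs_where)
qed

(* Peaks and valleys alternate: their numbers differ only through the first and last step. *)
lemma peaks_minus_valleys: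
  "int (card (peaks (x # zs))) - int (card (valleys (x # zs)))
     = (if x then 1 else 0) - (if last (x # zs) then 1 else 0)"
proof (induction zs arbitrary: x)
  case Nil then show ?case by (simp add: peaks_def valleys_def pairs_where_def)
next
  case (Cons y zs)
  show ?case using Cons.IH[of y] unfolding peaks_def valleys_def card_pairs_where_Cons2 by auto
qed

(* A nonempty Dyck path starts with U and ends with D, hence has one more peak than valleys. *)
lemma dyck_card_peaks:
  assumes a: "a \<in> dyck n" and n: "n \<ge> 1"
  shows "card (peaks a) = card (valleys a) + 1"
proof -
  have la: "length a = 2 * n" using a dyck_length by blast
  then obtain x zs where xz: "a = x # zs" using n by (cases a) auto
  have "0 \<le> height a 1" by (rule dyck_nonneg[OF a])
  then have x: "x" using xz by (auto split: if_splits)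
  have "height a (2 * n) = height a (2 * n - 1) + updown (a ! (2 * n - 1))"
    using height_Suc[of "2 * n - 1" a] la n by simp
  then have "\<not> a ! (2 * n - 1)"
    using dyck_nonneg[OF a, of "2 * n - 1"] dyck_end[OF a, of "2 * n"] by (auto split: if_splits)
  moreover have "last a = a ! (2 * n - 1)" using la n by (subst last_conv_nth) auto
  ultimately show ?thesis using peaks_minus_valleys[of x zs] x xz by simp
qed

definition flip :: "bool list \<Rightarrow> nat \<Rightarrow> bool list" where
  "flip a i = take i a @ True # False # drop (i + 2) a"

lemma length_flip: "i \<in> valleys a \<Longrightarrow> length (flip a i) = length a"
  by (auto simp: flip_def valley_iff)

lemma height_flip:
  assumes "i \<in> valleys a"
  shows "height (flip a i) k = height a k + (if k = Suc i then 2 else 0)"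
proof -
  from assms have v: "Suc i < length a" "\<not> a ! i" "a ! Suc i" by (auto simp: valley_iff)
  then have "height a (Suc i) = height a i - 1" "height a (i + 2) = height a i"
    using height_Suc[of i a] height_Suc[of "Suc i" a] by simp_all
  moreover have "Suc (Suc (k - 2)) = k" if "Suc i < k" using that by arith
  ultimately show ?thesis unfolding flip_def using v by (subst height_replace) auto
qed

lemma flip_le: "i \<in> valleys a \<Longrightarrow> path_le a (flip a i)"
  by (simp add: path_le_def height_flip)

lemma flip_neq: "i \<in> valleys a \<Longrightarrow> flip a i \<noteq> a"
  using height_flip[of i a "Suc i"] by auto

lemma flip_inj: "i \<in> valleys a \<Longrightarrow> j \<in> valleys a \<Longrightarrow> flip a i = flip a j \<Longrightarrow> i = j"
  using height_flip[of i a "Suc i"] height_flip[of j a "Suc i"] by (auto split: if_splits)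

lemma flip_dyck: "a \<in> dyck n \<Longrightarrow> i \<in> valleys a \<Longrightarrow> flip a i \<in> dyck n"
  using length_flip[of i a] height_flip[of i a] by (auto simp: dyck_iff valley_iff)

definition insert_peak :: "bool list \<Rightarrow> nat \<Rightarrow> bool list" where
  "insert_peak b i = take i b @ True # False # drop i b"

lemma height_insert_peak:
  assumes "i \<le> length b"
  shows "height (insert_peak b i) k =
    (if k \<le> i then height b k else if k = Suc i then height b i + 1 else height b (k - 2))"
  unfolding insert_peak_def using assms by (subst height_replace) auto

lemma insert_peak_dyck:
  assumes b: "b \<in> dyck m" and i: "i \<le> 2 * m"
  shows "insert_peak b i \<in> dyck (Suc m)" "i \<in> peaks (insert_peak b i)"
proof -
  have lb: "length b = 2 * m" using b dyck_length by blast
  show "insert_peak b i \<in> dyck (Suc m)" unfolding dyck_iff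
    using lb i dyck_nonneg[OF b] dyck_end[OF b, of "2 * m"] height_insert_peak[of i b]
    by (auto simp: insert_peak_def add_nonneg_pos)
  show "i \<in> peaks (insert_peak b i)" using lb i by (auto simp: peak_iff insert_peak_def nth_append)
qed

lemma remove_insert_peak: "i \<le> length b \<Longrightarrow> take i (insert_peak b i) @ drop (i + 2) (insert_peak b i) = b"
  by (simp add: insert_peak_def)

lemma insert_peak_surj:
  assumes a: "a \<in> dyck (Suc m)" and p: "i \<in> peaks a"
  shows "\<exists>b\<in>dyck m. i \<le> 2 * m \<and> a = insert_peak b i"
proof -
  have la: "length a = 2 * m + 2" using a dyck_length by fastforce
  from p have si: "Suc i < length a" and ai: "a ! i" and ai1: "\<not> a ! Suc i" by (auto simp: peak_iff)
  define b where "b = take i a @ drop (i + 2) a"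
  have lb: "length b = 2 * m" using la si by (simp add: b_def)
  have "a = take i a @ a ! i # a ! Suc i # drop (i + 2) a"
    using si by (metis Cons_nth_drop_Suc Suc_lessD add_2_eq_Suc' append_take_drop_id)
  then have ab: "a = insert_peak b i" using ai ai1 si by (simp add: insert_peak_def b_def)
  have ib: "i \<le> length b" using si la lb by simp
  have "height b j = (if j < i then height a j else height a (j + 2))" for j
    using height_insert_peak[OF ib, of j] height_insert_peak[OF ib, of "j + 2"]
    by (auto simp flip: ab)
  then have "b \<in> dyck m"
    unfolding dyck_iff using lb dyck_nonneg[OF a] dyck_end[OF a, of "2 * m + 2"] si la by auto
  then show ?thesis using ab si la by auto
qed

(* No path lies strictly between a and flip a i: the two only differ at position i + 1, by 2,
   and the parity of heights forbids the intermediate value. *)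
lemma between_flip:
  assumes v: "i \<in> valleys a" and len: "length c = length a"
    and lo: "path_le a c" and hi: "path_le c (flip a i)"
  shows "c = a \<or> c = flip a i"
proof -
  have lo: "height a k \<le> height c k" for k using lo unfolding path_le_def by blast
  have hi: "height c k \<le> height a k + (if k = Suc i then 2 else 0)" for k
    using hi unfolding path_le_def height_flip[OF v] by blast
  have off: "height c k = height a k" if "k \<noteq> Suc i" for k
    using lo[of k] hi[of k] that by simp
  have "Suc i \<le> length a" using v by (auto simp: valley_iff)
  then have "even (height c (Suc i) - height a (Suc i))" using height_diff_even len by metis
  then obtain t where t: "height c (Suc i) - height a (Suc i) = 2 * t" by (rule evenE)
  have "t = 0 \<or> t = 1" using t lo[of "Suc i"] hi[of "Suc i"] by simp presburger
  then show ?thesis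
  proof
    assume "t = 0"
    then have "height c k = height a k" for k using t off by (cases "k = Suc i") auto
    then show ?thesis using heights_eq_imp_eq len by blast
  next
    assume "t = 1"
    then have "height c k = height (flip a i) k" for k
      using t off unfolding height_flip[OF v] by (cases "k = Suc i") auto
    then show ?thesis using heights_eq_imp_eq len length_flip[OF v] by metis
  qed
qed

lemma flip_covers:
  assumes a: "a \<in> dyck n" and v: "i \<in> valleys a"
  shows "covers (dyck n) path_le a (flip a i)"
  unfolding covers_def
  using a flip_dyck[OF a v] flip_le[OF v] flip_neq[OF v]
    between_flip[OF v] dyck_length[of _ n] by metis

(* If a < b, take a position k where a lies strictly below b and a is lowest there; then a has
   a valley at k - 1 and flipping it keeps a below b. *)
lemma exists_flip_below:
  assumes a: "a \<in> dyck n" and b: "b \<in> dyck n" and le: "path_le a b" and ne: "a \<noteq> b"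
  shows "\<exists>i\<in>valleys a. path_le (flip a i) b"
proof -
  have la: "length a = 2 * n" and lb: "length b = 2 * n" using a b dyck_length by blast+
  have lek: "height a k \<le> height b k" for k using le unfolding path_le_def by blast
  have "\<exists>k. height a k < height b k"
  proof (rule ccontr)
    assume "\<nexists>k. height a k < height b k"
    then have "height a k = height b k" for k using lek[of k] by (meson antisym_conv2)
    then show False using heights_eq_imp_eq[of a b] la lb ne by simp
  qed
  then obtain k where kK: "height a k < height b k"
    and kmin: "\<And>k'. height a k' < height b k' \<Longrightarrow> height a k \<le> height a k'"
    using ex_has_least_nat[of "\<lambda>k. height a k < height b k" _ "\<lambda>k. nat (height a k)"]
      dyck_nonneg[OF a] by (metis nat_le_eq_zle)
  have "k \<noteq> 0" using kK by (cases k) auto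
  then obtain j where kj: "k = Suc j" by (cases k) auto
  have k2: "k < 2 * n"
    using kK dyck_end[OF a, of k] dyck_end[OF b, of k] by (cases "k < 2 * n") auto
  have "even (height b k - height a k)" using height_diff_even[of a b k] k2 la lb by simp
  then obtain t where t: "height b k - height a k = 2 * t" by (rule evenE)
  then have gap: "height a k + 2 \<le> height b k" using kK by presburger
  have "\<not> a ! j"
  proof
    assume "a ! j"
    then have "height a j < height b j" "height a j < height a k"
      using height_Suc[of j a] height_Suc[of j b] kj k2 la lb gap by (simp_all split: if_splits)
    then show False using kmin[of j] by simp
  qed
  moreover have "a ! k"
  proof (rule ccontr)
    assume "\<not> a ! k"
    then have "height a (Suc k) < height b (Suc k)" "height a (Suc k) < height a k"
      using height_Suc[of k a] height_Suc[of k b] k2 la lb gap by (simp_all split: if_splits)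
    then show False using kmin[of "Suc k"] by simp
  qed
  ultimately have v: "j \<in> valleys a" using kj k2 la by (simp add: valley_iff)
  have "path_le (flip a j) b"
    unfolding path_le_def height_flip[OF v] using lek gap kj by simp
  then show ?thesis using v by blast
qed

lemma dyck_covers_iff:
  "covers (dyck n) path_le a b \<longleftrightarrow> a \<in> dyck n \<and> (\<exists>i\<in>valleys a. b = flip a i)"
proof
  assume cv: "covers (dyck n) path_le a b"
  then have a: "a \<in> dyck n" and b: "b \<in> dyck n" and "path_le a b" "a \<noteq> b"
    unfolding covers_def by blast+
  then obtain i where v: "i \<in> valleys a" and "path_le (flip a i) b"
    using exists_flip_below by blast
  then have "b = flip a i"
    using cv flip_dyck[OF a v] flip_le[OF v] flip_neq[OF v] unfolding covers_def by blast
  then show "a \<in> dyck n \<and> (\<exists>i\<in>valleys a. b = flip a i)" using a v by blast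
qed (auto intro: flip_covers)

lemma ell_dyck_sum_valleys: "ell_dyck n = (\<Sum>a\<in>dyck n. card (valleys a))"
proof -
  have edges: "{(a, b). covers (dyck n) path_le a b} = (\<lambda>(a, i). (a, flip a i)) ` Sigma (dyck n) valleys"
    unfolding dyck_covers_iff by fastforce
  have "inj_on (\<lambda>(a, i). (a, flip a i)) (Sigma (dyck n) valleys)"
    by (auto simp: inj_on_def dest: flip_inj)
  then have "ell_dyck n = card (Sigma (dyck n) valleys)"
    unfolding ell_dyck_def hasse_edges_def edges by (rule card_image)
  also have "\<dots> = (\<Sum>a\<in>dyck n. card (valleys a))"
    using finite_dyck by (simp add: valleys_def finite_pairs_where)
  finally show ?thesis .
qed

(* Peak insertion is a bijection from pairs (Dyck path of semi-length m, position <= 2m) onto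
   pairs (Dyck path of semi-length m + 1, peak). *)
lemma sum_card_peaks: "(\<Sum>a\<in>dyck (Suc m). card (peaks a)) = (2 * m + 1) * card (dyck m)"
proof -
  have "inj_on (\<lambda>(b, i). (insert_peak b i, i)) (dyck m \<times> {..2 * m})"
    by (rule inj_onI) (clarsimp, metis remove_insert_peak dyck_length)
  moreover have "Sigma (dyck (Suc m)) peaks = (\<lambda>(b, i). (insert_peak b i, i)) ` (dyck m \<times> {..2 * m})"
    using insert_peak_surj insert_peak_dyck by fastforce
  ultimately have "card (Sigma (dyck (Suc m)) peaks) = card (dyck m \<times> {..2 * m})"
    by (simp add: card_image)
  then show ?thesis
    using finite_dyck by (simp add: peaks_def finite_pairs_where card_cartesian_product)
qed

lemma ell_dyck_0: "ell_dyck 0 = 0"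
proof -
  have "dyck 0 = {[]}" by (auto simp: dyck_def)
  then show ?thesis by (simp add: ell_dyck_sum_valleys valleys_def pairs_where_def)
qed

(* Combining the two counts: valleys = peaks - 1 summed over all Dyck paths. *)
lemma ell_dyck_Suc: "ell_dyck (Suc m) + card (dyck (Suc m)) = (2 * m + 1) * card (dyck m)"
proof -
  have "(\<Sum>a\<in>dyck (Suc m). card (peaks a)) = (\<Sum>a\<in>dyck (Suc m). card (valleys a) + 1)"
    by (rule sum.cong) (auto simp: dyck_card_peaks)
  also have "\<dots> = ell_dyck (Suc m) + card (dyck (Suc m))"
    unfolding sum.distrib ell_dyck_sum_valleys by simp
  finally show ?thesis using sum_card_peaks[of m] by simp
qed

(* Paths of length L from height h down to height 0 that never go below the axis.  Dyck paths
   are the case h = 0, L = 2n; splitting off the first step gives a Pascal-type recursion. *)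
definition ground_paths :: "nat \<Rightarrow> nat \<Rightarrow> bool list set" where
  "ground_paths h L = {xs. length xs = L \<and> (\<forall>k. 0 \<le> int h + height xs k) \<and> int h + height xs L = 0}"

lemma dyck_eq_ground_paths: "dyck n = ground_paths 0 (2 * n)"
  unfolding ground_paths_def using dyck_iff by auto

lemma finite_ground_paths: "finite (ground_paths h L)"
proof (rule finite_subset)
  show "ground_paths h L \<subseteq> {xs. set xs \<subseteq> UNIV \<and> length xs = L}" by (auto simp: ground_paths_def)
  show "finite {xs :: bool list. set xs \<subseteq> UNIV \<and> length xs = L}"
    by (rule finite_lists_length_eq) simp
qed

lemma ground_paths_too_short: "L < h \<Longrightarrow> ground_paths h L = {}"
proof (rule equals0I)
  fix xs assume "L < h" "xs \<in> ground_paths h L"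
  then show False using height_lower_bound[of L xs] by (simp add: ground_paths_def)
qed

lemma Cons_ground_paths_iff:
  "x # ys \<in> ground_paths h (Suc L) \<longleftrightarrow>
     (if x then ys \<in> ground_paths (h + 1) L else 0 < h \<and> ys \<in> ground_paths (h - 1) L)"
proof -
  have above: "(\<forall>k. 0 \<le> int h + height (x # ys) k) \<longleftrightarrow> (\<forall>k. 0 \<le> int h + updown x + height ys k)"
  proof
    assume "\<forall>k. 0 \<le> int h + height (x # ys) k"
    then show "\<forall>k. 0 \<le> int h + updown x + height ys k"
      by (metis add.assoc height_Cons_Suc)
  next
    assume "\<forall>k. 0 \<le> int h + updown x + height ys k"
    then show "\<forall>k. 0 \<le> int h + height (x # ys) k"
      by (metis add.assoc height_Cons_Suc height_0 of_nat_0_le_iff add_0_right old.nat.exhaust)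
  qed
  define c where "c = int h + updown x"
  have mem: "x # ys \<in> ground_paths h (Suc L) \<longleftrightarrow>
      length ys = L \<and> (\<forall>k. 0 \<le> c + height ys k) \<and> c + height ys L = 0"
    unfolding ground_paths_def mem_Collect_eq above c_def by (simp add: add.assoc)
  consider "x" "c = int (h + 1)" | "\<not> x" "0 < h" "c = int (h - 1)" | "\<not> x" "h = 0" "c < 0"
    unfolding c_def by (cases x; cases "0 < h") auto
  then show ?thesis
  proof cases
    case 1 then show ?thesis unfolding mem by (simp add: ground_paths_def)
  next
    case 2 then show ?thesis unfolding mem by (simp add: ground_paths_def)
  next
    case 3
    then have "\<not> 0 \<le> c + height ys 0" by simp
    then have "\<not> (\<forall>k. 0 \<le> c + height ys k)" by blast
    then show ?thesis unfolding mem using 3 by simp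
  qed
qed

lemma card_ground_paths_Suc:
  "card (ground_paths h (Suc L)) =
     card (ground_paths (h + 1) L) + (if 0 < h then card (ground_paths (h - 1) L) else 0)"
proof -
  have split: "ground_paths h (Suc L) = Cons True ` ground_paths (h + 1) L
      \<union> (if 0 < h then Cons False ` ground_paths (h - 1) L else {})"
  proof (rule set_eqI)
    fix xs show "xs \<in> ground_paths h (Suc L) \<longleftrightarrow> xs \<in> Cons True ` ground_paths (h + 1) L
        \<union> (if 0 < h then Cons False ` ground_paths (h - 1) L else {})"
    proof (cases xs)
      case Nil then show ?thesis by (auto simp: ground_paths_def)
    next
      case (Cons x ys) then show ?thesis by (cases x) (auto simp: Cons_ground_paths_iff)
    qed
  qed
  have "card (Cons b ` ground_paths k L) = card (ground_paths k L)" for b k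
    by (rule card_image) simp
  then show ?thesis unfolding split
    by (subst card_Un_disjoint) (auto simp: finite_ground_paths)
qed

lemma card_ground_paths_straight: "card (ground_paths h h) = 1"
proof (induction h)
  case 0
  have "ground_paths 0 0 = {[]}" by (auto simp: ground_paths_def)
  then show ?case by simp
next
  case (Suc h)
  then show ?case using card_ground_paths_Suc[of "Suc h" h] ground_paths_too_short[of h "Suc (Suc h)"]
    by simp
qed

(* The ballot numbers, in the subtraction-free form
     #paths + C(h + 2u, h + u + 1) = C(h + 2u, u),
   proved by induction on the length using only Pascal's rule. *)
lemma card_ground_paths:
  "card (ground_paths h (h + 2 * u)) + ((h + 2 * u) choose (h + u + 1)) = (h + 2 * u) choose u"
proof (induction "h + 2 * u" arbitrary: h u)
  case 0 then show ?case by (simp add: card_ground_paths_straight)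
next
  case (Suc L)
  show ?case
  proof (cases u)
    case 0 then show ?thesis by (simp add: card_ground_paths_straight)
  next
    case (Suc v)
    then have L: "L = (h + 1) + 2 * v" using Suc.hyps by simp
    have up: "card (ground_paths (h + 1) L) + (L choose (h + v + 2)) = L choose v"
      using Suc.hyps(1)[of "h + 1" v] L by simp
    have down: "(if 0 < h then card (ground_paths (h - 1) L) else 0) + (L choose (h + v + 1))
        = L choose Suc v"
    proof (cases h)
      case (Suc h')
      then show ?thesis using Suc.hyps(1)[of h' "Suc v"] L by simp
    qed simp
    have len: "h + 2 * u = Suc L" and idx: "h + u + 1 = Suc (h + v + 1)"
      using Suc.hyps Suc by simp_all
    have "card (ground_paths h (h + 2 * u)) + ((h + 2 * u) choose (h + u + 1))
        = card (ground_paths (h + 1) L) + (if 0 < h then card (ground_paths (h - 1) L) else 0)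
          + ((L choose (h + v + 1)) + (L choose (h + v + 2)))"
      unfolding len idx card_ground_paths_Suc by simp
    also have "\<dots> = (L choose v) + (L choose Suc v)" using up down by simp
    also have "\<dots> = Suc L choose Suc v" by simp
    also have "\<dots> = (h + 2 * u) choose u" unfolding len using Suc by (simp only:)
    finally show ?thesis .
  qed
qed

lemma Suc_times_choose_Suc: "Suc k * (N choose Suc k) = (N - k) * (N choose k)"
  by (metis binomial_absorption binomial_absorb_comp)

lemma catalan_dyck: "(n + 1) * card (dyck n) = (2 * n) choose n"
proof -
  have "card (dyck n) + ((2 * n) choose (n + 1)) = (2 * n) choose n"
    using card_ground_paths[of 0 n] by (simp add: dyck_eq_ground_paths)
  moreover have "(n + 1) * ((2 * n) choose (n + 1)) = n * ((2 * n) choose n)"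
    using Suc_times_choose_Suc[of n "2 * n"] by simp
  ultimately have "(n + 1) * card (dyck n) + n * ((2 * n) choose n) = (n + 1) * ((2 * n) choose n)"
    by (metis add_mult_distrib2)
  then show ?thesis by simp
qed

lemma central_binomial_Suc: "(n + 1) * ((2 * Suc n) choose Suc n) = 2 * (2 * n + 1) * ((2 * n) choose n)"
proof -
  define Y where "Y = Suc (2 * n) choose n"
  have "(n + 1) * ((2 * Suc n) choose Suc n) = (n + 1) * (2 * Y)"
    using Suc_times_binomial[of n "Suc (2 * n)"] unfolding Y_def
    by (simp add: algebra_simps del: binomial_Suc_Suc)
  also have "\<dots> = 2 * (Suc n * (Suc (2 * n) choose Suc n))"
    using binomial_symmetric[of "Suc n" "Suc (2 * n)"] unfolding Y_def by simp
  also have "\<dots> = 2 * (2 * n + 1) * ((2 * n) choose n)"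
    using Suc_times_binomial[of n "2 * n"] by simp
  finally show ?thesis .
qed

(* The closed form of the number of Hasse edges, stated without division:
   2 (n + 1) l(D_n) = (n - 1) C(2n, n)  (truncated subtraction makes it hold also for n = 0). *)
lemma ell_dyck_closed: "2 * (n + 1) * ell_dyck n = (n - 1) * ((2 * n) choose n)"
proof (cases n)
  case 0 then show ?thesis by (simp add: ell_dyck_0)
next
  case (Suc m)
  define c where "c = real (card (dyck m))"
  define c' where "c' = real (card (dyck (Suc m)))"
  define B where "B = real ((2 * m) choose m)"
  define B' where "B' = real ((2 * Suc m) choose Suc m)"
  define e where "e = real (ell_dyck (Suc m))"
  have rec: "e = (2 * m + 1) * c - c'"
    using arg_cong[OF ell_dyck_Suc[of m], of real] unfolding e_def c_def c'_def
    by (simp add: algebra_simps)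
  have cat: "(m + 1) * c = B" "(m + 2) * c' = B'"
    using arg_cong[OF catalan_dyck[of m], of real] arg_cong[OF catalan_dyck[of "Suc m"], of real]
    unfolding c_def c'_def B_def B'_def by (simp_all add: algebra_simps del: binomial_Suc_Suc)
  have cen: "(m + 1) * B' = 2 * (2 * m + 1) * B"
    using arg_cong[OF central_binomial_Suc[of m], of real] unfolding B_def B'_def
    by (simp add: algebra_simps del: binomial_Suc_Suc)
  have "(m + 1) * (2 * (m + 2) * e) = (m + 1) * (m * B')"
  proof -
    have "(m + 1) * (2 * (m + 2) * e) = 2 * (m + 2) * (2 * m + 1) * ((m + 1) * c) - 2 * (m + 1) * ((m + 2) * c')"
      unfolding rec by (simp add: algebra_simps)
    also have "\<dots> = (m + 2) * ((m + 1) * B') - 2 * (m + 1) * B'"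
      unfolding cat cen by (simp add: algebra_simps)
    finally show ?thesis by (simp add: algebra_simps)
  qed
  then have "2 * (m + 2) * e = m * B'" by simp
  then have "real (2 * (n + 1) * ell_dyck n) = real ((n - 1) * ((2 * n) choose n))"
    unfolding Suc e_def B'_def by (simp add: algebra_simps del: binomial_Suc_Suc)
  then show ?thesis by (simp only: of_nat_eq_iff)
qed

lemma ell_dyck_binomial:
  assumes "n \<ge> 2" shows "ell_dyck n = (2 * n - 1) choose (n - 2)"
proof -
  obtain k where n: "n = k + 2" using assms by (metis add.commute le_Suc_ex)
  have "(k + 2) * ((2 * k + 4) choose (k + 2)) = (k + 2) * (2 * ((2 * k + 3) choose (k + 1)))"
    using Suc_times_binomial[of "k + 1" "2 * k + 3"] by (simp add: algebra_simps del: binomial_Suc_Suc)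
  then have double: "(2 * k + 4) choose (k + 2) = 2 * ((2 * k + 3) choose (k + 1))"
    by (metis mult_left_cancel add_2_eq_Suc' zero_neq_numeral add_is_0)
  have shift: "(k + 1) * ((2 * k + 3) choose (k + 1)) = (k + 3) * ((2 * k + 3) choose k)"
    using Suc_times_choose_Suc[of k "2 * k + 3"] by simp
  have idx: "2 * (k + 2) = 2 * k + 4" "k + 2 - 1 = k + 1" "k + 2 + 1 = k + 3"
      "2 * (k + 2) - 1 = 2 * k + 3" "k + 2 - 2 = k"
    by simp_all
  have "(k + 3) * (2 * ell_dyck n) = (k + 1) * ((2 * k + 4) choose (k + 2))"
    using ell_dyck_closed[of "k + 2"] unfolding n idx by (simp only: mult_ac)
  also have "\<dots> = 2 * ((k + 1) * ((2 * k + 3) choose (k + 1)))" unfolding double by simp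
  also have "\<dots> = (k + 3) * (2 * ((2 * k + 3) choose k))" unfolding shift by simp
  finally show ?thesis unfolding n idx by (simp add: add.commute)
qed

(* l(D_n) as a combination of central binomial coefficients, which is how the generating
   function is assembled: 2 l(D_n) = C(2n+2, n+1) - 3 C(2n, n) + [n = 0]. *)
lemma ell_dyck_coefficient:
  "((2 * Suc n) choose Suc n) + (if n = 0 then 1 else 0) = 2 * ell_dyck n + 3 * ((2 * n) choose n)"
proof (cases n)
  case 0 then show ?thesis by (simp add: ell_dyck_0 numeral_2_eq_2)
next
  case (Suc m)
  have "(n + 1) * ((2 * Suc n) choose Suc n) = (n + 1) * (2 * ell_dyck n + 3 * ((2 * n) choose n))"
    using central_binomial_Suc[of n] ell_dyck_closed[of n] unfolding Suc
    by (simp add: algebra_simps del: binomial_Suc_Suc)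
  then show ?thesis using Suc by (simp only: mult_left_cancel) simp
qed

lemma ell_dyck_real:
  assumes "n \<ge> 1"
  shows "real (ell_dyck n) = 1/2 * real ((2 * n) choose n) * (real n - 1) / (real n + 1)"
proof -
  have "2 * (real n + 1) * real (ell_dyck n) = (real n - 1) * real ((2 * n) choose n)"
    using arg_cong[OF ell_dyck_closed[of n], of real] assms by (simp add: of_nat_diff algebra_simps)
  then show ?thesis by (simp add: field_simps)
qed

lemma hasse_index_dyck:
  assumes "n \<ge> 1" shows "hasse_index (dyck n) path_le = (real n - 1) / 2"
proof -
  define B where "B = real ((2 * n) choose n)"
  have "B > 0" unfolding B_def by simp
  have card: "real (card (dyck n)) = B / (real n + 1)"
    using arg_cong[OF catalan_dyck[of n], of real] unfolding B_def by (simp add: field_simps)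
  have ell: "real (ell_dyck n) = B * (real n - 1) / (2 * (real n + 1))"
    using ell_dyck_real[OF assms] unfolding B_def by simp
  have "real n + 1 \<noteq> 0" by simp
  then show ?thesis
    unfolding hasse_index_def ell_dyck_def[symmetric] card ell using \<open>B > 0\<close> by (simp add: divide_simps)
qed

(* C(2n, n) = (-4)^n binom(-1/2, n), so the generalised binomial theorem yields the classical
   series sum C(2n, n) x^n = 1 / sqrt (1 - 4x) for |x| < 1/4. *)
lemma gbinomial_minus_half: "((-1/2 :: real) gchoose n) * (-4) ^ n = real ((2 * n) choose n)"
proof (induction n)
  case (Suc n)
  have step: "real (Suc n) * ((-1/2 :: real) gchoose Suc n) = (-1/2 - real n) * ((-1/2) gchoose n)"
    using gbinomial_absorption[of n "-1/2 :: real"] gbinomial_absorb_comp[of "-1/2 :: real" n] by simp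
  have "(real n + 1) * (((-1/2 :: real) gchoose Suc n) * (-4) ^ Suc n)
      = (real (Suc n) * ((-1/2) gchoose Suc n)) * (-4) ^ Suc n"
    by (simp add: mult.assoc)
  also have "\<dots> = (-1/2 - real n) * (-4) * (((-1/2) gchoose n) * (-4) ^ n)"
    by (simp only: step power_Suc mult_ac)
  also have "\<dots> = (real n + 1) * real ((2 * Suc n) choose Suc n)"
    using Suc.IH arg_cong[OF central_binomial_Suc[of n], of real]
    by (simp add: algebra_simps del: binomial_Suc_Suc)
  finally have "(real n + 1) * (((-1/2 :: real) gchoose Suc n) * (-4) ^ Suc n)
      = (real n + 1) * real ((2 * Suc n) choose Suc n)" .
  moreover have "real n + 1 \<noteq> 0" by simp
  ultimately show ?case using mult_left_cancel by blast
qed simp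

lemma central_binomial_series:
  fixes x :: real assumes x: "\<bar>x\<bar> < 1/4"
  shows "(\<lambda>n. real ((2 * n) choose n) * x ^ n) sums (1 / sqrt (1 - 4 * x))"
proof -
  have "\<bar>-4 * x\<bar> < 1" using x by simp
  then have "(\<lambda>n. ((-1/2) gchoose n) * (-4 * x) ^ n) sums (1 + -4 * x) powr (-1/2)"
    by (rule gen_binomial_real)
  moreover have "((-1/2) gchoose n) * (-4 * x) ^ n = real ((2 * n) choose n) * x ^ n" for n
    by (simp only: power_mult_distrib mult.assoc [symmetric] gbinomial_minus_half)
  moreover have "(1 + -4 * x) powr (-1/2) = 1 / sqrt (1 - 4 * x)"
    using x by (simp add: powr_minus_divide powr_half_sqrt)
  ultimately show ?thesis by simp
qed

lemma ell_dyck_series: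
  fixes x :: real assumes x0: "x \<noteq> 0" and x: "\<bar>x\<bar> < 1/4"
  shows "(\<lambda>n. real (ell_dyck n) * x ^ n) sums
           ((1 - 3 * x - (1 - x) * sqrt (1 - 4 * x)) / (2 * x * sqrt (1 - 4 * x)))"
proof -
  define s where "s = sqrt (1 - 4 * x)"
  define B where "B n = real ((2 * n) choose n)" for n
  have "s \<noteq> 0" unfolding s_def using x by simp
  have S0: "(\<lambda>n. B n * x ^ n) sums (1 / s)"
    unfolding B_def s_def by (rule central_binomial_series[OF x])
  then have "(\<lambda>n. B (Suc n) * x ^ Suc n) sums (1 / s - 1)"
    by (subst sums_Suc_iff) (simp add: B_def)
  then have "(\<lambda>n. B (Suc n) * x ^ Suc n / x) sums ((1 / s - 1) / x)" by (rule sums_divide)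
  then have S1: "(\<lambda>n. B (Suc n) * x ^ n) sums ((1 / s - 1) / x)" using x0 by simp
  have S2: "(\<lambda>n. if n = 0 then 1 else 0) sums (1 :: real)"
    using sums_single[of 0 "\<lambda>_. 1 :: real"] by simp
  have "(\<lambda>n. (B (Suc n) * x ^ n + (if n = 0 then 1 else 0) - 3 * (B n * x ^ n)) / 2)
      sums (((1 / s - 1) / x + 1 - 3 * (1 / s)) / 2)"
    by (intro sums_divide sums_diff sums_add sums_mult S0 S1 S2)
  moreover have "(\<lambda>n. (B (Suc n) * x ^ n + (if n = 0 then 1 else 0) - 3 * (B n * x ^ n)) / 2)
      = (\<lambda>n. real (ell_dyck n) * x ^ n)"
  proof
    fix n
    show "(B (Suc n) * x ^ n + (if n = 0 then 1 else 0) - 3 * (B n * x ^ n)) / 2 = real (ell_dyck n) * x ^ n"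
      using arg_cong[OF ell_dyck_coefficient[of n], of real] unfolding B_def
      by (cases "n = 0") (simp_all add: algebra_simps del: binomial_Suc_Suc)
  qed
  moreover have "((1 / s - 1) / x + 1 - 3 * (1 / s)) / 2 = (1 - 3 * x - (1 - x) * s) / (2 * x * s)"
    using \<open>s \<noteq> 0\<close> x0 by (simp add: field_simps)
  ultimately have "(\<lambda>n. real (ell_dyck n) * x ^ n) sums ((1 - 3 * x - (1 - x) * s) / (2 * x * s))"
    by (simp only:)
  then show ?thesis unfolding s_def .
qed

theorem mainTheorem3:
  shows "(\<forall>x::real. x \<noteq> 0 \<and> \<bar>x\<bar> < 1/4 \<longrightarrow>
            (\<lambda>n. real (ell_dyck n) * x ^ n) sums
              ((1 - 3 * x - (1 - x) * sqrt (1 - 4 * x)) / (2 * x * sqrt (1 - 4 * x))))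
       \<and> (\<forall>n::nat. n \<ge> 2 \<longrightarrow>
            real (ell_dyck n) = 1/2 * real ((2 * n) choose n) * (real n - 1) / (real n + 1)
          \<and> ell_dyck n = (2 * n - 1) choose (n - 2))
       \<and> (\<forall>n::nat. n \<ge> 1 \<longrightarrow> hasse_index (dyck n) path_le = (real n - 1) / 2)
       \<and> (\<lambda>n. hasse_index (dyck n) path_le) \<sim>[at_top] (\<lambda>n. real n / 2)"
proof (intro conjI allI impI)
  fix x :: real assume "x \<noteq> 0 \<and> \<bar>x\<bar> < 1/4"
  then show "(\<lambda>n. real (ell_dyck n) * x ^ n) sums
      ((1 - 3 * x - (1 - x) * sqrt (1 - 4 * x)) / (2 * x * sqrt (1 - 4 * x)))"
    using ell_dyck_series by blast
next
  fix n :: nat assume "n \<ge> 2"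
  then show "real (ell_dyck n) = 1/2 * real ((2 * n) choose n) * (real n - 1) / (real n + 1)"
    by (intro ell_dyck_real) simp
  show "ell_dyck n = (2 * n - 1) choose (n - 2)" using \<open>n \<ge> 2\<close> by (rule ell_dyck_binomial)
next
  fix n :: nat assume "n \<ge> 1"
  then show "hasse_index (dyck n) path_le = (real n - 1) / 2" by (rule hasse_index_dyck)
next
  have "(\<lambda>n. (real n - 1) / 2) \<sim>[at_top] (\<lambda>n. real n / 2)" by real_asymp
  moreover have "\<forall>\<^sub>F n in at_top. (real n - 1) / 2 = hasse_index (dyck n) path_le"
    using eventually_ge_at_top[of "1 :: nat"] by eventually_elim (simp add: hasse_index_dyck)
  ultimately show "(\<lambda>n. hasse_index (dyck n) path_le) \<sim>[at_top] (\<lambda>n. real n / 2)"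
    by (rule asymp_equiv_transfer) simp
qed

end
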